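(* Let $\Phi$ be a real-valued function defined on $\mathbb{R}^2\times I_{2\pi}^2$ and let $r>0$. Suppose $\Phi$ can be uniformly analytically extended to $\mathbb{W}(r)^2$ with respect to $\boldsymbol\theta$, that for every $\boldsymbol\vartheta\in I_{2\pi}^2$ with $\zeta(\boldsymbol\vartheta)\ne0$ the function $\Phi(\cdot,\boldsymbol\vartheta)$ is $2\pi$-biperiodic, and that there exists $M>0$ such that for all $0<\delta<r$, $$\int_{I_{2\pi}^2}S_{\delta,\Phi}(\boldsymbol\vartheta)\,d\boldsymbol\vartheta\le M.$$ Then for all $0<\delta<r$ and all $\mathbf{k},\mathbf{l}\in\mathbb{Z}^2$, $|\hat\Phi_{\mathbf{k},\mathbf{l}}|\le\frac{M}{2\pi}e^{-\delta\|\mathbf{k}\|_1}$.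
   Context: $I_{2\pi}=[0,2\pi)$. For $\boldsymbol\theta=[\theta_0,\theta_1]\in I_{2\pi}^2$, $\zeta(\boldsymbol\theta)=\sqrt{(\min\{\theta_0,2\pi-\theta_0\})^2+(\min\{\theta_1,2\pi-\theta_1\})^2}$. For $r>0$, $\mathbb{W}(r)=\{z\in\mathbb{C}:|\mathrm{Im}\,z|<r\}$. A function $\Phi$ on $\mathbb{R}^2\times I_{2\pi}^2$ can be uniformly analytically extended to $\mathbb{W}(r)^2$ with respect to $\boldsymbol\theta$ if there is a function (still denoted $\Phi$) on $\mathbb{W}(r)^2\times I_{2\pi}^2$ such that for every $\boldsymbol\vartheta\in I_{2\pi}^2$ with $\zeta(\boldsymbol\vartheta)\ne0$, $\Phi(\cdot,\boldsymbol\vartheta)$ is holomorphic on $\mathbb{W}(r)^2$ and coincides with the original $\Phi(\cdot,\boldsymbol\vartheta)$ on $\mathbb{R}^2$. For $0<\delta<r$ and such $\boldsymbol\vartheta$, $S_{\delta,\Phi}(\boldsymbol\vartheta)=2\pi\sup\{|\Phi(\mathbf{z},\boldsymbol\vartheta)|:\mathbf{z}=[z_0,z_1]\in\mathbb{C}^2,\ |\mathrm{Im}\,z_0|=|\mathrm{Im}\,z_1|=\delta\}$. For $\mathbf{k}=[k_0,k_1]\in\mathbb{Z}^2$, $e_{\mathbf{k}}(\boldsymbol\theta)=\frac{1}{2\pi}e^{i(k_0\theta_0+k_1\theta_1)}$, $\|\mathbf{k}\|_1=|k_0|+|k_1|$, and for $\mathbf{k},\mathbf{l}\in\mathbb{Z}^2$,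 $\hat\Phi_{\mathbf{k},\mathbf{l}}=\int_{I_{2\pi}^2}\int_{I_{2\pi}^2}\Phi(\boldsymbol\theta,\boldsymbol\eta)e_{-\mathbf{k}}(\boldsymbol\theta)e_{-\mathbf{l}}(\boldsymbol\eta)\,d\boldsymbol\theta\,d\boldsymbol\eta$. *)

theory Defs
  imports "HOL-Analysis.Analysis"
begin

definition I2pi :: "real set" where
  "I2pi = {0..<2*pi}"

definition zeta :: "real \<times> real \<Rightarrow> real" where
  "zeta \<theta> = sqrt ((min (fst \<theta>) (2*pi - fst \<theta>))^2 + (min (snd \<theta>) (2*pi - snd \<theta>))^2)"

definition strip :: "real \<Rightarrow> complex set" where
  "strip r = {z. \<bar>Im z\<bar> < r}"

definition holomorphic2_on :: "(complex \<times> complex \<Rightarrow> complex) \<Rightarrow> (complex \<times> complex) set \<Rightarrow> bool" where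
  "holomorphic2_on f S \<longleftrightarrow> (\<forall>z\<in>S. \<exists>a b. (f has_derivative (\<lambda>h. a * fst h + b * snd h)) (at z within S))"

definition unif_analytic_ext ::
  "(real \<times> real \<Rightarrow> real \<times> real \<Rightarrow> real) \<Rightarrow> (complex \<times> complex \<Rightarrow> real \<times> real \<Rightarrow> complex) \<Rightarrow> real \<Rightarrow> bool" where
  "unif_analytic_ext Phi Phie r \<longleftrightarrow>
     (\<forall>\<tau> \<in> I2pi \<times> I2pi. zeta \<tau> \<noteq> 0 \<longrightarrow>
        holomorphic2_on (\<lambda>z. Phie z \<tau>) (strip r \<times> strip r) \<and>
        (\<forall>x0 x1. Phie (complex_of_real x0, complex_of_real x1) \<tau> = complex_of_real (Phi (x0, x1) \<tau>)))"

definition S_delta ::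
  "real \<Rightarrow> (complex \<times> complex \<Rightarrow> real \<times> real \<Rightarrow> complex) \<Rightarrow> real \<times> real \<Rightarrow> ennreal" where
  "S_delta \<delta> Phie \<tau> = ennreal (2*pi) *
     (SUP z \<in> {z :: complex \<times> complex. \<bar>Im (fst z)\<bar> = \<delta> \<and> \<bar>Im (snd z)\<bar> = \<delta>}. ennreal (cmod (Phie z \<tau>)))"

definition ebasis :: "int \<times> int \<Rightarrow> real \<times> real \<Rightarrow> complex" where
  "ebasis k \<theta> = (1 / (2 * pi)) * exp (\<i> * (of_int (fst k) * fst \<theta> + of_int (snd k) * snd \<theta>))"

definition norm1 :: "int \<times> int \<Rightarrow> int" where
  "norm1 k = \<bar>fst k\<bar> + \<bar>snd k\<bar>"

definition fourier2 :: "(real \<times> real \<Rightarrow> real \<times> real \<Rightarrow> real) \<Rightarrow> int \<times> int \<Rightarrow> int \<times> int \<Rightarrow> complex" where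
  "fourier2 Phi k l =
     (LINT \<eta>:(I2pi \<times> I2pi)|lborel. (LINT \<theta>:(I2pi \<times> I2pi)|lborel.
        complex_of_real (Phi \<theta> \<eta>) * ebasis (- k) \<theta> * ebasis (- l) \<eta>))"

end

(* Fix eta away from the origin and put P = Phie(., eta). P is holomorphic on W(r)^2 and, by the
   identity theorem, 2 pi-periodic there in each variable, so by Cauchy's theorem the integral of P
   against e_{-k} over the real torus equals the integral over the shifted torus
   Im z_j = -sgn(k_j) delta. There |P| <= S_delta(eta) / (2 pi) and |e_{-k}| = exp(-delta ||k||_1) / (2 pi),
   which bounds the inner integral pointwise in eta. Integrating over eta, with |e_{-l}| = 1 / (2 pi),
   gives the claim; the excluded point zeta = 0 is the origin, a null set. *)

theory Submission
  imports Defs "HOL-Complex_Analysis.Complex_Analysis"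
begin

lemma strip_eq: "strip r = {z. Im z < r} \<inter> {z. Im z > -r}"
  by (auto simp: strip_def)

lemma open_strip: "open (strip r)"
  unfolding strip_eq by (intro open_Int open_halfspace_Im_lt open_halfspace_Im_gt)

lemma convex_strip: "convex (strip r)"
  unfolding strip_eq by (intro convex_Int convex_halfspace_Im_lt convex_halfspace_Im_gt)

lemma strip_add_real_iff [simp]: "z + of_real x \<in> strip r \<longleftrightarrow> z \<in> strip r"
  by (simp add: strip_def)

lemma of_real_in_strip: "r > 0 \<Longrightarrow> of_real x \<in> strip r"
  by (simp add: strip_def)

lemma shifted_real_in_strip: "of_real x + \<i> * of_real c \<in> strip r \<longleftrightarrow> \<bar>c\<bar> < r"
  by (simp add: strip_def)

lemma holomorphic_on_strip_eq_zero:
  fixes g :: "complex \<Rightarrow> complex"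
  assumes "r > 0" "g holomorphic_on strip r" "\<And>x. g (of_real x) = 0" "z \<in> strip r"
  shows "g z = 0"
proof (rule analytic_continuation[OF assms(2) open_strip convex_connected[OF convex_strip]])
  show "\<real> \<subseteq> strip r" "0 \<in> strip r"
    using assms(1) by (auto simp: strip_def elim!: Reals_cases)
  show "(0::complex) islimpt \<real>"
  proof (rule islimptI)
    fix T :: "complex set" assume "0 \<in> T" "open T"
    then obtain e where "e > 0" "ball 0 e \<subseteq> T" by (meson openE)
    then show "\<exists>y\<in>\<real>. y \<in> T \<and> y \<noteq> 0"
      by (intro bexI[of _ "of_real (e/2)"]) (auto simp: dist_norm)
  qed
  show "\<And>z. z \<in> \<real> \<Longrightarrow> g z = 0" using assms(3) by (auto elim!: Reals_cases)
qed fact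

lemma holomorphic_on_strip_periodic:
  fixes h :: "complex \<Rightarrow> complex"
  assumes r: "r > 0" and hol: "h holomorphic_on strip r"
    and per: "\<And>x. h (of_real (x + p)) = h (of_real x)" and z: "z \<in> strip r"
  shows "h (z + of_real p) = h z"
proof -
  have "(\<lambda>z. h (z + of_real p)) holomorphic_on strip r"
    by (rule holomorphic_on_compose_gen[OF _ hol, unfolded o_def]) (auto intro!: holomorphic_intros)
  then have "(\<lambda>z. h (z + of_real p) - h z) holomorphic_on strip r"
    using hol by (intro holomorphic_intros)
  from holomorphic_on_strip_eq_zero[OF r this _ z] per show ?thesis by simp
qed

text \<open>Both integrals are differences \<open>H (a + p) - H a\<close> of a primitive \<open>H\<close> of \<open>h\<close>,
  taken at \<open>a = 0\<close> and \<open>a = \<i> c\<close>; by periodicity this difference has derivative zero.\<close>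
lemma integral_periodic_shift_strip:
  fixes h :: "complex \<Rightarrow> complex"
  assumes r: "r > 0" and p: "p > 0" and hol: "h holomorphic_on strip r"
    and per: "\<And>x. h (of_real (x + p)) = h (of_real x)" and c: "\<bar>c\<bar> < r"
  shows "integral {0..p} (\<lambda>x. h (of_real x)) = integral {0..p} (\<lambda>x. h (of_real x + \<i> * of_real c))"
proof -
  obtain H where H: "\<And>a. a \<in> strip r \<Longrightarrow> (H has_field_derivative h a) (at a within strip r)"
    using holomorphic_convex_primitive'[OF convex_strip open_strip hol] by metis
  have H_at: "(H has_field_derivative h a) (at a)" if "a \<in> strip r" for a
    using H[OF that] at_within_open[OF that open_strip] by simp
  define D where "D a = H (a + of_real p) - H a" for a
  have "\<exists>C. \<forall>a\<in>strip r. D a = C"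
  proof (rule has_field_derivative_zero_constant[OF convex_strip])
    fix a assume a: "a \<in> strip r"
    have "((\<lambda>a. H (a + of_real p)) has_field_derivative h (a + of_real p)) (at a)"
      using DERIV_shift H_at a by (metis strip_add_real_iff)
    then have "(D has_field_derivative h (a + of_real p) - h a) (at a)"
      unfolding D_def by (intro derivative_intros H_at[OF a])
    then show "(D has_field_derivative 0) (at a within strip r)"
      using holomorphic_on_strip_periodic[OF r hol per a] by (simp add: has_field_derivative_at_within)
  qed
  then obtain C where C: "\<And>a. a \<in> strip r \<Longrightarrow> D a = C" by blast
  have "((\<lambda>x. h (of_real x + a)) has_integral C) {0..p}" if a: "a \<in> strip r" for a
  proof -
    have "path_image (linepath a (a + of_real p)) \<subseteq> strip r"
      using a convex_strip by (simp add: closed_segment_subset)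
    then have "(h has_contour_integral C) (linepath a (a + of_real p))"
      using contour_integral_primitive[OF H] C[OF a] unfolding D_def by fastforce
    then have "((\<lambda>x. h (linepath a (a + of_real p) x) * of_real p) has_integral C) {0..1}"
      by (simp add: has_contour_integral_linepath)
    then have "((\<lambda>z. h (z + a)) has_contour_integral C) (linepath 0 (of_real p))"
      unfolding has_contour_integral_linepath by (simp add: linepath_def algebra_simps)
    then show ?thesis
      using has_contour_integral_linepath_Reals_iff[of 0 "of_real p" "\<lambda>z. h (z + a)"] p by simp
  qed
  from this[of 0] this[of "\<i> * of_real c"] r c show ?thesis
    by (simp add: integral_unique strip_def add.commute)
qed

lemma integral_square_periodic_shift_strip:
  fixes G :: "complex \<times> complex \<Rightarrow> complex"
  assumes r: "r > 0" and p: "p > 0"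
    and cont: "continuous_on (strip r \<times> strip r) G"
    and hol_fst: "\<And>w. w \<in> strip r \<Longrightarrow> (\<lambda>z. G (z, w)) holomorphic_on strip r"
    and hol_snd: "\<And>z. z \<in> strip r \<Longrightarrow> (\<lambda>w. G (z, w)) holomorphic_on strip r"
    and per_fst: "\<And>x y. G (of_real (x + p), of_real y) = G (of_real x, of_real y)"
    and per_snd: "\<And>x y. G (of_real x, of_real (y + p)) = G (of_real x, of_real y)"
    and c0: "\<bar>c0\<bar> < r" and c1: "\<bar>c1\<bar> < r"
  shows "integral (cbox (0, 0) (p, p)) (\<lambda>(x, y). G (of_real x, of_real y)) =
         integral (cbox (0, 0) (p, p)) (\<lambda>(x, y). G (of_real x + \<i> * of_real c0, of_real y + \<i> * of_real c1))"
proof -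
  let ?G = "\<lambda>a b x y. G (of_real x + \<i> * of_real a, of_real y + \<i> * of_real b)"
  have cont_shift: "continuous_on (cbox (0, 0) (p, p)) (\<lambda>(x, y). ?G a b x y)"
    if "\<bar>a\<bar> < r" "\<bar>b\<bar> < r" for a b
    unfolding split_def using that
    by (intro continuous_on_compose2[OF cont] continuous_intros) (auto simp: shifted_real_in_strip)
  have per_fst': "G (of_real (x + p), w) = G (of_real x, w)" if "w \<in> strip r" for x w
  proof -
    have "(\<lambda>w. G (of_real (x + p), w) - G (of_real x, w)) holomorphic_on strip r"
      using r by (intro holomorphic_intros hol_snd of_real_in_strip)
    from holomorphic_on_strip_eq_zero[OF r this _ that] per_fst show ?thesis by simp
  qed
  have "integral (cbox (0, 0) (p, p)) (\<lambda>(x, y). G (of_real x, of_real y))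
      = integral {0..p} (\<lambda>x. integral {0..p} (\<lambda>y. G (of_real x, of_real y)))"
    using integral_prod_continuous[OF cont_shift[of 0 0]] r by (simp add: cbox_interval)
  also have "\<dots> = integral {0..p} (\<lambda>x. integral {0..p} (\<lambda>y. G (of_real x, of_real y + \<i> * of_real c1)))"
    by (rule integral_cong)
      (use integral_periodic_shift_strip[OF r p hol_snd per_snd c1] r in \<open>simp add: of_real_in_strip\<close>)
  also have "\<dots> = integral {0..p} (\<lambda>y. integral {0..p} (\<lambda>x. G (of_real x, of_real y + \<i> * of_real c1)))"
    using integral_swap_continuous[OF cont_shift[of 0 c1]] r c1 by (simp add: cbox_interval)
  also have "\<dots> = integral {0..p} (\<lambda>y. integral {0..p} (\<lambda>x. ?G c0 c1 x y))"
    by (rule integral_cong)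
      (use integral_periodic_shift_strip[OF r p hol_fst per_fst' c0] c1 in \<open>simp add: shifted_real_in_strip\<close>)
  also have "\<dots> = integral {0..p} (\<lambda>x. integral {0..p} (\<lambda>y. ?G c0 c1 x y))"
    using integral_swap_continuous[OF cont_shift[of c0 c1]] c0 c1 by (simp add: cbox_interval)
  also have "\<dots> = integral (cbox (0, 0) (p, p)) (\<lambda>(x, y). ?G c0 c1 x y)"
    using integral_prod_continuous[OF cont_shift[of c0 c1]] c0 c1 by (simp add: cbox_interval)
  finally show ?thesis by simp
qed

lemma holomorphic2_on_imp_continuous_on: "holomorphic2_on F S \<Longrightarrow> continuous_on S F"
  unfolding holomorphic2_on_def continuous_on_eq_continuous_within
  by (meson has_derivative_continuous)

lemma holomorphic2_on_has_derivative_at: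
  assumes "holomorphic2_on F S" "open S" "p \<in> S"
  obtains a b where "(F has_derivative (\<lambda>h. a * fst h + b * snd h)) (at p)"
  using assms at_within_open[OF assms(3,2)] unfolding holomorphic2_on_def by metis

lemma holomorphic2_on_holomorphic_fst:
  assumes "holomorphic2_on F (S \<times> T)" "open S" "open T" "w \<in> T"
  shows "(\<lambda>z. F (z, w)) holomorphic_on S"
proof (rule holomorphic_onI)
  fix z assume "z \<in> S"
  with assms obtain a b where "(F has_derivative (\<lambda>h. a * fst h + b * snd h)) (at (z, w))"
    by (metis holomorphic2_on_has_derivative_at mem_Sigma_iff open_Times)
  moreover have "((\<lambda>z. (z, w)) has_derivative (\<lambda>h. (h, 0))) (at z)"
    by (intro derivative_eq_intros) auto
  ultimately have "((\<lambda>z. F (z, w)) has_derivative (\<lambda>h. a * h)) (at z)"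
    by (auto dest: has_derivative_compose)
  then have "((\<lambda>z. F (z, w)) has_field_derivative a) (at z)"
    by (simp add: has_field_derivative_def)
  then show "(\<lambda>z. F (z, w)) field_differentiable at z within S"
    using field_differentiable_at_within field_differentiable_def by blast
qed

lemma holomorphic2_on_holomorphic_snd:
  assumes "holomorphic2_on F (S \<times> T)" "open S" "open T" "z \<in> S"
  shows "(\<lambda>w. F (z, w)) holomorphic_on T"
proof (rule holomorphic_onI)
  fix w assume "w \<in> T"
  with assms obtain a b where "(F has_derivative (\<lambda>h. a * fst h + b * snd h)) (at (z, w))"
    by (metis holomorphic2_on_has_derivative_at mem_Sigma_iff open_Times)
  moreover have "((\<lambda>w. (z, w)) has_derivative (\<lambda>h. (0, h))) (at w)"
    by (intro derivative_eq_intros) auto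
  ultimately have "((\<lambda>w. F (z, w)) has_derivative (\<lambda>h. b * h)) (at w)"
    by (auto dest: has_derivative_compose)
  then have "((\<lambda>w. F (z, w)) has_field_derivative b) (at w)"
    by (simp add: has_field_derivative_def)
  then show "(\<lambda>w. F (z, w)) field_differentiable at w within T"
    using field_differentiable_at_within field_differentiable_def by blast
qed

lemma norm_integral_square_le:
  fixes f :: "real \<times> real \<Rightarrow> 'a::banach"
  assumes p: "0 \<le> p" and cont: "continuous_on (cbox (0, 0) (p, p)) f"
    and bound: "\<And>\<theta>. \<theta> \<in> cbox (0, 0) (p, p) \<Longrightarrow> norm (f \<theta>) \<le> B"
  shows "norm (integral (cbox (0, 0) (p, p)) f) \<le> B * p^2"
proof -
  have "(0, 0) \<in> cbox (0, 0) (p, p)"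
    using p by (simp add: cbox_Pair_eq)
  then have "0 \<le> B"
    by (rule order_trans[OF norm_ge_zero bound])
  from has_integral_bound[OF this integrable_integral[OF integrable_continuous[OF cont]] bound]
  show ?thesis using p by (simp add: content_Pair power2_eq_square)
qed

lemma exp_int_2pi_times_i: "exp (of_int n * (2 * of_real pi * \<i>)) = (1::complex)"
  using exp_integer_2pi[of "of_int n"] by (simp add: mult_ac)

text \<open>The contour is moved to \<open>Im z = -sgn(k) \<delta>\<close> in each variable, where the exponential
  has modulus \<open>exp (-\<delta> \<bar>k\<bar>)\<close>.\<close>
lemma norm_integral_exp_strip_le:
  fixes P :: "complex \<times> complex \<Rightarrow> complex" and k :: "int \<times> int"
  assumes r: "r > 0" and hol: "holomorphic2_on P (strip r \<times> strip r)"
    and per_fst: "\<And>x y. P (of_real (x + 2*pi), of_real y) = P (of_real x, of_real y)"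
    and per_snd: "\<And>x y. P (of_real x, of_real (y + 2*pi)) = P (of_real x, of_real y)"
    and \<delta>: "0 < \<delta>" "\<delta> < r"
    and B: "\<And>z. \<bar>Im (fst z)\<bar> = \<delta> \<Longrightarrow> \<bar>Im (snd z)\<bar> = \<delta> \<Longrightarrow> cmod (P z) \<le> B"
  shows "cmod (integral (cbox (0, 0) (2*pi, 2*pi))
           (\<lambda>(x, y). P (of_real x, of_real y) * exp (- \<i> * (of_int (fst k) * of_real x + of_int (snd k) * of_real y))))
         \<le> B * exp (- \<delta> * of_int (norm1 k)) * (2*pi)^2"
proof -
  define E where "E z w = exp (- \<i> * (of_int (fst k) * z + of_int (snd k) * w))" for z w
  define G where "G p = P p * E (fst p) (snd p)" for p
  define c0 where "c0 = (if fst k \<ge> 0 then - \<delta> else \<delta>)"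
  define c1 where "c1 = (if snd k \<ge> 0 then - \<delta> else \<delta>)"
  have c: "\<bar>c0\<bar> = \<delta>" "\<bar>c1\<bar> = \<delta>" "of_int (fst k) * c0 + of_int (snd k) * c1 = - \<delta> * of_int (norm1 k)"
    using \<delta> by (auto simp: c0_def c1_def norm1_def algebra_simps)
  have "E (z + of_real (2*pi)) w = E z w * exp (of_int (- fst k) * (2 * of_real pi * \<i>))"
    and "E z (w + of_real (2*pi)) = E z w * exp (of_int (- snd k) * (2 * of_real pi * \<i>))" for z w
    by (simp_all add: E_def algebra_simps flip: exp_add)
  then have E_periodic: "E (z + of_real (2*pi)) w = E z w" "E z (w + of_real (2*pi)) = E z w" for z w
    by (simp_all only: exp_int_2pi_times_i mult_1_right)
  have cont: "continuous_on (strip r \<times> strip r) G"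
    using holomorphic2_on_imp_continuous_on[OF hol] unfolding G_def E_def by (intro continuous_intros)
  have "integral (cbox (0, 0) (2*pi, 2*pi)) (\<lambda>(x, y). G (of_real x, of_real y)) =
        integral (cbox (0, 0) (2*pi, 2*pi)) (\<lambda>(x, y). G (of_real x + \<i> * of_real c0, of_real y + \<i> * of_real c1))"
  proof (rule integral_square_periodic_shift_strip[OF r])
    show "continuous_on (strip r \<times> strip r) G" by (fact cont)
    show "(\<lambda>z. G (z, w)) holomorphic_on strip r" if "w \<in> strip r" for w
      unfolding G_def E_def using holomorphic2_on_holomorphic_fst[OF hol open_strip open_strip that]
      by (auto intro!: holomorphic_intros)
    show "(\<lambda>w. G (z, w)) holomorphic_on strip r" if "z \<in> strip r" for z
      unfolding G_def E_def using holomorphic2_on_holomorphic_snd[OF hol open_strip open_strip that]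
      by (auto intro!: holomorphic_intros)
    show "G (of_real (x + 2*pi), of_real y) = G (of_real x, of_real y)"
      and "G (of_real x, of_real (y + 2*pi)) = G (of_real x, of_real y)" for x y
      using per_fst per_snd E_periodic by (simp_all add: G_def)
  qed (use c \<delta> in auto)
  also have "cmod \<dots> \<le> B * exp (- \<delta> * of_int (norm1 k)) * (2*pi)^2"
  proof (rule norm_integral_square_le)
    show "continuous_on (cbox (0, 0) (2*pi, 2*pi))
            (\<lambda>(x, y). G (of_real x + \<i> * of_real c0, of_real y + \<i> * of_real c1))"
      unfolding case_prod_unfold using c \<delta>
      by (intro continuous_on_compose2[OF cont] continuous_intros) (auto simp: shifted_real_in_strip)
    show "cmod ((\<lambda>(x, y). G (of_real x + \<i> * of_real c0, of_real y + \<i> * of_real c1)) \<theta>)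
          \<le> B * exp (- \<delta> * of_int (norm1 k))" for \<theta> :: "real \<times> real"
    proof -
      obtain x y where \<theta>: "\<theta> = (x, y)" by fastforce
      have "cmod (E (of_real x + \<i> * of_real c0) (of_real y + \<i> * of_real c1)) = exp (- \<delta> * of_int (norm1 k))"
        using c(3) by (simp add: E_def algebra_simps)
      then show ?thesis
        using B[of "(of_real x + \<i> * of_real c0, of_real y + \<i> * of_real c1)"] c
        by (simp add: \<theta> G_def norm_mult mult_right_mono)
    qed
  qed simp
  finally show ?thesis by (simp add: G_def E_def case_prod_unfold)
qed

lemma I2pi_square_in_sets_lborel: "I2pi \<times> I2pi \<in> sets lborel"
proof -
  have "I2pi \<times> I2pi \<in> sets (borel \<Otimes>\<^sub>M borel)"
    by (rule pair_measureI) (simp_all add: I2pi_def)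
  then show ?thesis by (simp only: borel_prod sets_lborel)
qed

lemma set_integral_I2pi_square_eq_integral:
  fixes g :: "real \<times> real \<Rightarrow> complex"
  assumes "continuous_on (cbox (0, 0) (2*pi, 2*pi)) g"
  shows "(LINT \<theta>:(I2pi \<times> I2pi)|lborel. g \<theta>) = integral (cbox (0, 0) (2*pi, 2*pi)) g"
proof -
  have sub: "I2pi \<times> I2pi \<subseteq> cbox (0, 0) (2*pi, 2*pi)"
    by (auto simp: I2pi_def cbox_Pair_eq)
  have "cbox (0, 0) (2*pi, 2*pi) - I2pi \<times> I2pi \<subseteq>
        {x. x \<bullet> (1::real, 0::real) = 2*pi} \<union> {x. x \<bullet> (0::real, 1::real) = 2*pi}"
    by (auto simp: I2pi_def cbox_Pair_eq)
  moreover have "negligible ({x. x \<bullet> (1::real, 0::real) = 2*pi} \<union> {x. x \<bullet> (0::real, 1::real) = 2*pi})"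
    by (intro negligible_Un negligible_standard_hyperplane) (auto simp: Basis_prod_def)
  ultimately have negl: "negligible (cbox (0, 0) (2*pi, 2*pi) - I2pi \<times> I2pi)"
    by (rule negligible_subset[rotated])
  have "set_integrable lborel (cbox (0, 0) (2*pi, 2*pi)) g"
    unfolding set_integrable_def by (rule borel_integrable_compact[OF compact_cbox assms])
  then have "set_integrable lborel (I2pi \<times> I2pi) g"
    by (rule set_integrable_subset[OF _ I2pi_square_in_sets_lborel sub])
  then show ?thesis
    by (simp add: set_borel_integral_eq_integral integral_subset_negligible[OF sub negl])
qed

lemma norm_ebasis: "cmod (ebasis k \<theta>) = 1 / (2*pi)"
  by (cases \<theta>) (simp add: ebasis_def norm_divide)

lemma ennreal_le_SUP_norm:
  assumes "\<And>B. (\<And>z. z \<in> Z \<Longrightarrow> norm (f z) \<le> B) \<Longrightarrow> x \<le> B"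
  shows "ennreal x \<le> (SUP z\<in>Z. ennreal (norm (f z)))"
proof (cases "(SUP z\<in>Z. ennreal (norm (f z))) = top")
  case False
  then obtain B where B: "(SUP z\<in>Z. ennreal (norm (f z))) = ennreal B" "0 \<le> B"
    by (cases "SUP z\<in>Z. ennreal (norm (f z))") auto
  have "norm (f z) \<le> B" if "z \<in> Z" for z
    using SUP_upper[OF that, of "\<lambda>z. ennreal (norm (f z))"] B by simp
  with assms B show ?thesis by (simp add: ennreal_leI)
qed (metis top_greatest)

lemma norm_set_integral_le_nn_integral:
  fixes f :: "'a \<Rightarrow> 'b::{banach, second_countable_topology}"
  assumes c: "0 \<le> c" and le: "AE x in M. indicator A x * ennreal (c * norm (f x)) \<le> g x"
  shows "ennreal (c * norm (LINT x:A|M. f x)) \<le> (\<integral>\<^sup>+x. g x \<partial>M)"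
proof (cases "set_integrable M A f")
  case False
  then show ?thesis by (simp add: set_lebesgue_integral_def set_integrable_def not_integrable_integral_eq)
next
  case True
  then have int: "integrable M (\<lambda>x. indicator A x *\<^sub>R f x)" by (simp add: set_integrable_def)
  then have meas: "(\<lambda>x. ennreal (norm (indicator A x *\<^sub>R f x))) \<in> borel_measurable M"
    using borel_measurable_integrable by measurable
  have "ennreal (c * norm (LINT x:A|M. f x)) = ennreal c * ennreal (norm (LINT x|M. indicator A x *\<^sub>R f x))"
    by (simp add: set_lebesgue_integral_def ennreal_mult c)
  also have "\<dots> \<le> ennreal c * (\<integral>\<^sup>+x. ennreal (norm (indicator A x *\<^sub>R f x)) \<partial>M)"
    by (intro mult_left_mono integral_norm_bound_ennreal int) simp
  also have "\<dots> = (\<integral>\<^sup>+x. ennreal c * ennreal (norm (indicator A x *\<^sub>R f x)) \<partial>M)"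
    by (rule nn_integral_cmult[OF meas, symmetric])
  also have "\<dots> = (\<integral>\<^sup>+x. indicator A x * ennreal (c * norm (f x)) \<partial>M)"
    by (intro nn_integral_cong) (simp add: indicator_def ennreal_mult c)
  also have "\<dots> \<le> (\<integral>\<^sup>+x. g x \<partial>M)"
    by (rule nn_integral_mono_AE[OF le])
  finally show ?thesis .
qed

lemma zeta_eq_0_imp_origin:
  assumes "\<tau> \<in> I2pi \<times> I2pi" "zeta \<tau> = 0"
  shows "\<tau> = (0, 0)"
  using assms by (auto simp: zeta_def I2pi_def min_def prod_eq_iff split: if_splits)

lemma norm_set_integral_ebasis_eq:
  fixes f :: "real \<times> real \<Rightarrow> real" and P :: "complex \<times> complex \<Rightarrow> complex"
  assumes r: "r > 0" and cont: "continuous_on (strip r \<times> strip r) P"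
    and P_real: "\<And>x y. P (of_real x, of_real y) = of_real (f (x, y))"
  shows "cmod (LINT \<theta>:(I2pi \<times> I2pi)|lborel. complex_of_real (f \<theta>) * ebasis (- k) \<theta> * ebasis (- l) \<eta>)
         = cmod (integral (cbox (0, 0) (2*pi, 2*pi)) (\<lambda>(x, y). P (of_real x, of_real y) *
             exp (- \<i> * (of_int (fst k) * of_real x + of_int (snd k) * of_real y)))) / (2*pi)^2"
proof -
  define g where "g = (\<lambda>(x, y). P (of_real x, of_real y) *
    exp (- \<i> * (of_int (fst k) * of_real x + of_int (snd k) * of_real y)))"
  have cont_g: "continuous_on (cbox (0, 0) (2*pi, 2*pi)) g"
    unfolding g_def case_prod_unfold
    by (intro continuous_intros continuous_on_compose2[OF cont])
      (auto intro!: continuous_intros simp: of_real_in_strip r)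
  define c where "c = ebasis (- l) \<eta> * of_real (1 / (2*pi))"
  have "complex_of_real (f \<theta>) * ebasis (- k) \<theta> * ebasis (- l) \<eta> = c * g \<theta>" for \<theta>
    by (cases \<theta>) (simp add: g_def c_def ebasis_def P_real algebra_simps)
  then have "(LINT \<theta>:(I2pi \<times> I2pi)|lborel. complex_of_real (f \<theta>) * ebasis (- k) \<theta> * ebasis (- l) \<eta>)
             = c * integral (cbox (0, 0) (2*pi, 2*pi)) g"
    by (simp add: set_integral_mult_right set_integral_I2pi_square_eq_integral[OF cont_g])
  moreover have "cmod c = 1 / (2*pi)^2"
    unfolding c_def norm_mult norm_ebasis norm_of_real by (simp add: power2_eq_square)
  ultimately show ?thesis by (simp add: g_def norm_mult)
qed

lemma fourier_inner_integral_le_S_delta: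
  fixes Phi :: "real \<times> real \<Rightarrow> real \<times> real \<Rightarrow> real"
    and Phie :: "complex \<times> complex \<Rightarrow> real \<times> real \<Rightarrow> complex"
  assumes r: "r > 0" and ext: "unif_analytic_ext Phi Phie r"
    and \<eta>: "\<eta> \<in> I2pi \<times> I2pi" "zeta \<eta> \<noteq> 0"
    and per_fst: "\<And>x0 x1. Phi (x0 + 2*pi, x1) \<eta> = Phi (x0, x1) \<eta>"
    and per_snd: "\<And>x0 x1. Phi (x0, x1 + 2*pi) \<eta> = Phi (x0, x1) \<eta>"
    and \<delta>: "0 < \<delta>" "\<delta> < r"
  shows "ennreal (2*pi * exp (\<delta> * of_int (norm1 k)) *
           cmod (LINT \<theta>:(I2pi \<times> I2pi)|lborel. complex_of_real (Phi \<theta> \<eta>) * ebasis (- k) \<theta> * ebasis (- l) \<eta>))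
         \<le> S_delta \<delta> Phie \<eta>"
proof -
  define P where "P z = Phie z \<eta>" for z
  have hol: "holomorphic2_on P (strip r \<times> strip r)"
    and P_real: "\<And>x0 x1. P (of_real x0, of_real x1) = of_real (Phi (x0, x1) \<eta>)"
    using ext \<eta> unfolding unif_analytic_ext_def P_def by auto
  have P_per_fst: "P (of_real (x + 2*pi), of_real y) = P (of_real x, of_real y)"
    and P_per_snd: "P (of_real x, of_real (y + 2*pi)) = P (of_real x, of_real y)" for x y
    by (simp_all only: P_real per_fst per_snd)
  define J where "J = integral (cbox (0, 0) (2*pi, 2*pi)) (\<lambda>(x, y). P (of_real x, of_real y) *
    exp (- \<i> * (of_int (fst k) * of_real x + of_int (snd k) * of_real y)))"
  have "ennreal (exp (\<delta> * of_int (norm1 k)) * (cmod J / (2*pi)^2))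
        \<le> (SUP z\<in>{z. \<bar>Im (fst z)\<bar> = \<delta> \<and> \<bar>Im (snd z)\<bar> = \<delta>}. ennreal (cmod (P z)))"
  proof (rule ennreal_le_SUP_norm)
    fix B assume "\<And>z. z \<in> {z. \<bar>Im (fst z)\<bar> = \<delta> \<and> \<bar>Im (snd z)\<bar> = \<delta>} \<Longrightarrow> cmod (P z) \<le> B"
    then have "cmod J \<le> B * exp (- \<delta> * of_int (norm1 k)) * (2*pi)^2"
      unfolding J_def by (rule norm_integral_exp_strip_le[OF r hol P_per_fst P_per_snd \<delta>]) auto
    then show "exp (\<delta> * of_int (norm1 k)) * (cmod J / (2*pi)^2) \<le> B"
      by (simp add: exp_minus field_simps)
  qed
  then have "ennreal (2*pi) * ennreal (exp (\<delta> * of_int (norm1 k)) * (cmod J / (2*pi)^2)) \<le> S_delta \<delta> Phie \<eta>"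
    unfolding S_delta_def P_def by (rule mult_left_mono) simp
  moreover have "cmod (LINT \<theta>:(I2pi \<times> I2pi)|lborel. complex_of_real (Phi \<theta> \<eta>) * ebasis (- k) \<theta> * ebasis (- l) \<eta>)
                 = cmod J / (2*pi)^2"
    unfolding J_def
    by (rule norm_set_integral_ebasis_eq[OF r holomorphic2_on_imp_continuous_on[OF hol] P_real])
  ultimately show ?thesis
    by (simp add: mult.assoc flip: ennreal_mult)
qed

theorem theorem2:
  fixes Phi :: "real \<times> real \<Rightarrow> real \<times> real \<Rightarrow> real"
    and Phie :: "complex \<times> complex \<Rightarrow> real \<times> real \<Rightarrow> complex"
    and r M :: real
  assumes r_pos: "r > 0"
    and ext: "unif_analytic_ext Phi Phie r"
    and period: "\<forall>\<tau> \<in> I2pi \<times> I2pi. zeta \<tau> \<noteq> 0 \<longrightarrow>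
        (\<forall>x0 x1. Phi (x0 + 2*pi, x1) \<tau> = Phi (x0, x1) \<tau> \<and> Phi (x0, x1 + 2*pi) \<tau> = Phi (x0, x1) \<tau>)"
    and M_pos: "M > 0"
    and bound: "\<forall>\<delta>. 0 < \<delta> \<and> \<delta> < r \<longrightarrow>
        (\<integral>\<^sup>+ \<tau> \<in> {\<tau> \<in> I2pi \<times> I2pi. zeta \<tau> \<noteq> 0}. S_delta \<delta> Phie \<tau> \<partial>lborel) \<le> ennreal M"
  shows "\<forall>\<delta>. 0 < \<delta> \<and> \<delta> < r \<longrightarrow> (\<forall>k l. cmod (fourier2 Phi k l) \<le> M / (2*pi) * exp (- \<delta> * of_int (norm1 k)))"
proof (intro allI impI)
  fix \<delta> :: real and k l :: "int \<times> int"
  assume \<delta>: "0 < \<delta> \<and> \<delta> < r"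
  define C where "C = 2*pi * exp (\<delta> * of_int (norm1 k))"
  have "AE \<eta> in lborel. indicator (I2pi \<times> I2pi) \<eta> *
          ennreal (C * cmod (LINT \<theta>:(I2pi \<times> I2pi)|lborel. complex_of_real (Phi \<theta> \<eta>) * ebasis (- k) \<theta> * ebasis (- l) \<eta>))
        \<le> S_delta \<delta> Phie \<eta> * indicator {\<tau> \<in> I2pi \<times> I2pi. zeta \<tau> \<noteq> 0} \<eta>"
    using AE_lborel_singleton[of "(0, 0)"]
  proof eventually_elim
    case (elim \<eta>)
    show ?case
    proof (cases "\<eta> \<in> I2pi \<times> I2pi")
      case True
      with elim have \<zeta>: "zeta \<eta> \<noteq> 0" using zeta_eq_0_imp_origin by blast
      with True period have "Phi (x0 + 2*pi, x1) \<eta> = Phi (x0, x1) \<eta>"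
        and "Phi (x0, x1 + 2*pi) \<eta> = Phi (x0, x1) \<eta>" for x0 x1 by auto
      from fourier_inner_integral_le_S_delta[OF r_pos ext True \<zeta> this \<delta>[THEN conjunct1] \<delta>[THEN conjunct2]]
      show ?thesis using True \<zeta> by (simp add: C_def)
    qed simp
  qed
  then have "ennreal (C * cmod (fourier2 Phi k l)) \<le> (\<integral>\<^sup>+ \<tau> \<in> {\<tau> \<in> I2pi \<times> I2pi. zeta \<tau> \<noteq> 0}. S_delta \<delta> Phie \<tau> \<partial>lborel)"
    unfolding fourier2_def by (rule norm_set_integral_le_nn_integral[rotated]) (simp add: C_def)
  also have "\<dots> \<le> ennreal M" using bound \<delta> by blast
  finally have "C * cmod (fourier2 Phi k l) \<le> M" using M_pos by simp
  then show "cmod (fourier2 Phi k l) \<le> M / (2*pi) * exp (- \<delta> * of_int (norm1 k))"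
    by (simp add: C_def exp_minus field_simps)
qed

end
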